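(* Let $\mathcal{M}\subset\mathbb{R}^n$ be a locally symmetric $C^2$ submanifold, $\sigma\in\Sigma^n$ and $\bar x\in\mathcal{M}\cap\Delta(\sigma)$. Then there exists $\delta>0$ such that for every $x\in\mathcal{M}\cap B(\bar x,\delta)$ there is $\sigma'\in\Sigma^n$ with $P(\sigma')$ refining $P(\sigma)$ and $x,\bar\pi_T(x)\in\Delta(\sigma')$.
   Context: $\Sigma^n$ permutations of $\mathbb{N}_n$ acting by $(\sigma x)_i=x_{\sigma^{-1}(i)}$; $P(\sigma)$ the partition into orbits of $\sigma$; $P(x)$ partition in which $i,j$ lie in the same set iff $x_i=x_j$; $\Delta(\sigma)=\{x:P(x)=P(\sigma)\}$; a partition $P'$ refines $P$ if every set of $P$ is a union of sets of $P'$. $\mathbb{R}^n_\ge=\{x:x_1\ge\cdots\ge x_n\}$; $B$ open ball. A set $S$ is locally symmetric if $S\cap\mathbb{R}^n_\ge\ne\emptyset$ and each $x\in S$ has $\delta>0$ with $\sigma(S\cap B(x,\delta))=S\cap B(x,\delta)$ for all $y\in S\cap B(x,\delta)$, all $\sigma$ with $\sigma y=y$; a locally symmetric $C^2$ submanifold is a connected $C^2$ submanifold without boundary that is locally symmetric. $\bar\pi_T$ is the orthogonal projection onto the affine space $\bar x+T_{\mathcal{M}}(\bar x)$. *)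

theory Defs
  imports "HOL-Analysis.Analysis"
begin

text \<open>Vectors in R^n are modelled as real^'n, where the finite index type 'n
carries a linear order playing the role of the order 1 < 2 < ... < n.\<close>

definition perm_act :: "('n::finite \<Rightarrow> 'n) \<Rightarrow> real^'n \<Rightarrow> real^'n" where
  "perm_act \<sigma> x = (\<chi> i. x $ (inv \<sigma> i))"

definition perm_partition :: "('n::finite \<Rightarrow> 'n) \<Rightarrow> 'n set set" where
  "perm_partition \<sigma> = {{j. \<exists>k::nat. (\<sigma> ^^ k) i = j} | i. True}"

definition vec_partition :: "real^'n::finite \<Rightarrow> 'n set set" where
  "vec_partition x = {{j. x $ j = x $ i} | i. True}"

definition Delta :: "('n::finite \<Rightarrow> 'n) \<Rightarrow> (real^'n) set" where
  "Delta \<sigma> = {x. vec_partition x = perm_partition \<sigma>}"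

definition refines :: "'a set set \<Rightarrow> 'a set set \<Rightarrow> bool" where
  "refines P' P \<longleftrightarrow> (\<forall>A\<in>P. \<exists>S. S \<subseteq> P' \<and> A = \<Union>S)"

definition ordered_cone :: "(real^'n::{finite,linorder}) set" where
  "ordered_cone = {x. \<forall>i j. i \<le> j \<longrightarrow> x $ j \<le> x $ i}"

definition locally_symmetric :: "(real^'n::{finite,linorder}) set \<Rightarrow> bool" where
  "locally_symmetric S \<longleftrightarrow>
     S \<inter> ordered_cone \<noteq> {} \<and>
     (\<forall>x\<in>S. \<exists>\<delta>>0. \<forall>y\<in>S \<inter> ball x \<delta>. \<forall>\<sigma>.
        \<sigma> permutes (UNIV::'n set) \<and> perm_act \<sigma> y = y \<longrightarrow>
        perm_act \<sigma> ` (S \<inter> ball x \<delta>) = S \<inter> ball x \<delta>)"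

definition C2_on :: "'a::euclidean_space set \<Rightarrow> ('a \<Rightarrow> 'b::euclidean_space) \<Rightarrow> bool" where
  "C2_on U f \<longleftrightarrow> (\<exists>f' f''. \<forall>x\<in>U.
      (f has_derivative blinfun_apply (f' x)) (at x) \<and>
      (f' has_derivative blinfun_apply (f'' x)) (at x) \<and>
      continuous_on U f'')"

definition C2_submanifold :: "'a::euclidean_space set \<Rightarrow> bool" where
  "C2_submanifold M \<longleftrightarrow> (\<forall>x\<in>M. \<exists>U V (\<phi>::'a \<Rightarrow> 'a) \<psi> L.
      open U \<and> x \<in> U \<and> open V \<and> C2_on U \<phi> \<and> C2_on V \<psi> \<and> \<phi> ` U = V \<and>
      (\<forall>y\<in>U. \<psi> (\<phi> y) = y) \<and> (\<forall>z\<in>V. \<phi> (\<psi> z) = z) \<and>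
      subspace L \<and> \<phi> ` (M \<inter> U) = V \<inter> L)"

definition locally_symmetric_C2_submanifold :: "(real^'n::{finite,linorder}) set \<Rightarrow> bool" where
  "locally_symmetric_C2_submanifold M \<longleftrightarrow>
     connected M \<and> C2_submanifold M \<and> locally_symmetric M"

definition tangent_space :: "'a::euclidean_space set \<Rightarrow> 'a \<Rightarrow> 'a set" where
  "tangent_space M x = {v. \<exists>\<gamma> e. e > 0 \<and> \<gamma> ` {-e<..<e} \<subseteq> M \<and> \<gamma> 0 = x \<and>
      (\<gamma> has_vector_derivative v) (at 0)}"

definition proj_tangent :: "'a::euclidean_space set \<Rightarrow> 'a \<Rightarrow> 'a \<Rightarrow> 'a" where
  "proj_tangent M xbar x = closest_point ((\<lambda>v. xbar + v) ` tangent_space M xbar) x"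

end

theory Submission
  imports Defs
begin

(* Near xbar, a coincidence x_i = x_j of coordinates forces xbar_i = xbar_j, so the transposition
   of i and j fixes xbar and, by local symmetry, maps M near xbar onto itself. It therefore
   preserves the tangent space T and commutes with the projection pi onto xbar + T, so x_i = x_j
   implies pi(x)_i = pi(x)_j. Conversely, if pi(x)_i = pi(x)_j, then x and its transpose are points
   of M near xbar with the same projection; since secants of a C^2 submanifold are nearly tangent
   near xbar, pi is injective there, and x is fixed by the transposition. Hence x and pi(x) have the
   same level-set partition; it refines P(xbar) = P(sigma) and is the orbit partition of the
   permutation that cycles through each level set in increasing order. *)

definition next_in_level :: "('n::{finite,linorder} \<Rightarrow> 'b) \<Rightarrow> 'n \<Rightarrow> 'n" where
  "next_in_level f i =
     (if \<exists>k. f k = f i \<and> k > i then Min {k. f k = f i \<and> k > i} else Min {k. f k = f i})"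

lemma next_in_level_same_value: "f (next_in_level f i) = f i"
proof (cases "\<exists>k. f k = f i \<and> k > i")
  case True
  have "Min {k. f k = f i \<and> k > i} \<in> {k. f k = f i \<and> k > i}"
    by (rule Min_in) (use True in auto)
  then show ?thesis using True by (simp add: next_in_level_def)
next
  case False
  have "Min {k. f k = f i} \<in> {k. f k = f i}"
    by (rule Min_in) auto
  then show ?thesis using False by (auto simp: next_in_level_def)
qed

lemma funpow_next_in_level_same_value: "f ((next_in_level f ^^ m) i) = f i"
  by (induction m) (auto simp: next_in_level_same_value)

lemma next_in_level_reaches_above:
  fixes f :: "'n::{finite,linorder} \<Rightarrow> 'b"
  shows "f j = f i \<Longrightarrow> i \<le> j \<Longrightarrow> \<exists>m. (next_in_level f ^^ m) i = j"
proof (induction "card {k. f k = f i \<and> i < k \<and> k \<le> j}" arbitrary: i rule: less_induct)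
  case less
  show ?case
  proof (cases "i = j")
    case True
    then show ?thesis by (intro exI[of _ 0]) auto
  next
    case False
    then have "i < j" using less.prems by auto
    then have ex: "\<exists>k. f k = f i \<and> k > i" using less.prems by auto
    define s where "s = Min {k. f k = f i \<and> k > i}"
    have s: "f s = f i" "i < s" unfolding s_def using Min_in[of "{k. f k = f i \<and> k > i}"] ex by auto
    have "s \<le> j" unfolding s_def by (rule Min_le) (use \<open>i < j\<close> less.prems in auto)
    have "{k. f k = f s \<and> s < k \<and> k \<le> j} \<subset> {k. f k = f i \<and> i < k \<and> k \<le> j}"
      using s \<open>s \<le> j\<close> by auto
    then have "card {k. f k = f s \<and> s < k \<and> k \<le> j} < card {k. f k = f i \<and> i < k \<and> k \<le> j}"
      by (rule psubset_card_mono[rotated]) simp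
    then obtain m where "(next_in_level f ^^ m) s = j"
      using less.hyps[of s] s \<open>s \<le> j\<close> less.prems by auto
    moreover have "next_in_level f i = s" using ex by (simp add: next_in_level_def s_def)
    ultimately have "(next_in_level f ^^ Suc m) i = j"
      by (simp add: funpow_Suc_right del: funpow.simps)
    then show ?thesis by blast
  qed
qed

lemma next_in_level_reaches:
  fixes f :: "'n::{finite,linorder} \<Rightarrow> 'b"
  assumes "f j = f i"
  shows "\<exists>m. (next_in_level f ^^ m) i = j"
proof -
  define C where "C = {k. f k = f i}"
  have C: "finite C" "i \<in> C" "j \<in> C" using assms by (auto simp: C_def)
  have max: "Max C \<in> C" "i \<le> Max C" using C by (auto intro: Max_in Max_ge)
  obtain m1 where m1: "(next_in_level f ^^ m1) i = Max C"
    using next_in_level_reaches_above[of f "Max C" i] max by (auto simp: C_def)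
  from max(1) have "\<not> (\<exists>k. f k = f (Max C) \<and> k > Max C)"
    using Max_ge[OF C(1)] by (metis C_def leD mem_Collect_eq)
  moreover have "{k. f k = f (Max C)} = C" using max(1) by (auto simp: C_def)
  ultimately have wrap: "next_in_level f (Max C) = Min C" by (auto simp: next_in_level_def)
  have min: "Min C \<in> C" "Min C \<le> j" using C by (auto intro: Min_in Min_le)
  obtain m2 where m2: "(next_in_level f ^^ m2) (Min C) = j"
    using next_in_level_reaches_above[of f j "Min C"] min C(3) by (auto simp: C_def)
  have "(next_in_level f ^^ (m2 + 1 + m1)) i = j" unfolding funpow_add by (simp add: m1 wrap m2)
  then show ?thesis by blast
qed

lemma next_in_level_permutes: "next_in_level (f::'n::{finite,linorder} \<Rightarrow> 'b) permutes UNIV"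
proof -
  have "j \<in> range (next_in_level f)" for j
  proof -
    obtain m where "(next_in_level f ^^ m) (next_in_level f j) = j"
      using next_in_level_reaches[of f j "next_in_level f j"] next_in_level_same_value[of f j] by auto
    then have "j = next_in_level f ((next_in_level f ^^ m) j)" by (metis funpow_swap1)
    then show ?thesis by blast
  qed
  then have "surj (next_in_level f)" by blast
  then show ?thesis
    using finite_UNIV_surj_inj[of "next_in_level f"] by (intro bij_imp_permutes) (auto simp: bij_def)
qed

lemma perm_partition_next_in_level:
  "perm_partition (next_in_level f) = {{j. f j = f i} | i. True}"
proof -
  have "{j. \<exists>k::nat. (next_in_level f ^^ k) i = j} = {j. f j = f i}" for i
    using next_in_level_reaches[of f _ i] funpow_next_in_level_same_value[of f _ i] by auto
  then show ?thesis unfolding perm_partition_def by simp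
qed

lemma exists_perm_partition_eq_vec_partition:
  "\<exists>\<sigma>. \<sigma> permutes UNIV \<and> perm_partition \<sigma> = vec_partition (x::real^'n::{finite,linorder})"
  using next_in_level_permutes perm_partition_next_in_level[of "\<lambda>i. x $ i"]
  by (auto simp: vec_partition_def)

lemma refines_vec_partition:
  assumes "\<And>i j. x $ i = x $ j \<Longrightarrow> y $ i = y $ j"
  shows "refines (vec_partition x) (vec_partition (y::real^'n::finite))"
  unfolding refines_def
proof
  fix A assume "A \<in> vec_partition y"
  then obtain i where A: "A = {j. y $ j = y $ i}" by (auto simp: vec_partition_def)
  define S where "S = {{k. x $ k = x $ j} | j. y $ j = y $ i}"
  have "S \<subseteq> vec_partition x" by (auto simp: S_def vec_partition_def)
  moreover have "A = \<Union>S" by (auto simp: S_def A dest: assms)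
  ultimately show "\<exists>S. S \<subseteq> vec_partition x \<and> A = \<Union>S" by blast
qed

lemma vec_partition_eqI:
  assumes "\<And>i j. x $ i = x $ j \<longleftrightarrow> y $ i = y $ j"
  shows "vec_partition x = vec_partition (y::real^'n::finite)"
  using assms unfolding vec_partition_def by simp

lemma nth_eq_near_imp_nth_eq:
  "\<exists>d>0. \<forall>y. dist y x < d \<longrightarrow> (\<forall>i j. y $ i = y $ j \<longrightarrow> x $ i = x $ j)"
  for x :: "real^'n::finite"
proof -
  have "eventually (\<lambda>y. y $ i = y $ j \<longrightarrow> x $ i = x $ j) (nhds x)" for i j
  proof (cases "x $ i = x $ j")
    case False
    have "open {y::real^'n. y $ i \<noteq> y $ j}"
      by (intro open_Collect_neq continuous_intros)
    then have "eventually (\<lambda>y. y \<in> {y::real^'n. y $ i \<noteq> y $ j}) (nhds x)"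
      using False by (intro eventually_nhds_in_open) auto
    then show ?thesis by eventually_elim simp
  qed simp
  then have "eventually (\<lambda>y. \<forall>i j. y $ i = y $ j \<longrightarrow> x $ i = x $ j) (nhds x)"
    by (simp add: eventually_all_finite)
  then show ?thesis unfolding eventually_nhds_metric by blast
qed

abbreviation swap_coords :: "'n::finite \<Rightarrow> 'n \<Rightarrow> real^'n \<Rightarrow> real^'n" where
  "swap_coords i j \<equiv> perm_act (Transposition.transpose i j)"

lemma perm_act_nth [simp]: "perm_act \<sigma> x $ k = x $ inv \<sigma> k"
  by (simp add: perm_act_def)

lemma linear_perm_act: "linear (perm_act \<sigma>)"
  by (rule linearI) (simp_all add: vec_eq_iff)

lemma norm_perm_act:
  assumes "\<sigma> permutes UNIV"
  shows "norm (perm_act \<sigma> x) = norm x"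
proof -
  have "(\<Sum>i\<in>UNIV. (norm (x $ i))\<^sup>2) = (\<Sum>i\<in>UNIV. (norm (x $ inv \<sigma> i))\<^sup>2)"
    using sum.permute[OF permutes_inv[OF assms], of "\<lambda>i. (norm (x $ i))\<^sup>2"] by (simp add: o_def)
  then show ?thesis by (simp add: norm_vec_def L2_set_def)
qed

lemma dist_perm_act:
  "\<sigma> permutes UNIV \<Longrightarrow> dist (perm_act \<sigma> x) (perm_act \<sigma> y) = dist x y"
  by (simp add: dist_norm linear_diff[OF linear_perm_act, symmetric] norm_perm_act)

lemma swap_coords_involution: "swap_coords i j (swap_coords i j x) = x"
  by (simp add: vec_eq_iff)

lemma swap_coords_eq_self_iff: "swap_coords i j x = x \<longleftrightarrow> x $ i = x $ j"
  by (auto simp: vec_eq_iff Transposition.transpose_def)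

lemma transpose_permutes: "Transposition.transpose i j permutes UNIV"
  by (rule permutes_swap_id) auto

lemma translated_subspace:
  fixes T :: "'a::euclidean_space set"
  assumes "subspace T"
  shows "convex ((\<lambda>v. a + v) ` T)" "closed ((\<lambda>v. a + v) ` T)" "a \<in> (\<lambda>v. a + v) ` T"
  using assms subspace_imp_convex convex_translation closed_subspace closed_translation
  by (blast, blast, intro image_eqI[of _ _ 0] subspace_0, simp_all)

lemma closest_point_translated_subspace_orthogonal:
  fixes T :: "'a::euclidean_space set"
  assumes T: "subspace T" and t: "t \<in> T"
  shows "inner (x - closest_point ((\<lambda>v. a + v) ` T) x) t = 0"
proof -
  let ?S = "(\<lambda>v. a + v) ` T"
  let ?c = "closest_point ?S x"
  have S: "convex ?S" "closed ?S" "?S \<noteq> {}" using translated_subspace[OF T] by blast+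
  obtain v where v: "v \<in> T" "?c = a + v" using closest_point_in_set[OF S(2,3)] by blast
  have plus: "?c + t \<in> ?S"
    using v t T by (auto intro!: image_eqI[of _ _ "v + t"] subspace_add)
  have minus: "?c - t \<in> ?S"
    using v t T by (auto intro!: image_eqI[of _ _ "v - t"] subspace_diff)
  from closest_point_dot[OF S(1,2) plus, of x] closest_point_dot[OF S(1,2) minus, of x]
  show ?thesis by (simp add: inner_minus_right)
qed

lemma closest_point_isometry:
  assumes "convex S" "closed S" "S \<noteq> {}" "A ` S = S" "\<And>x y. dist (A x) (A y) = dist x y"
  shows "closest_point S (A x) = A (closest_point S x)"
proof -
  have "A (closest_point S x) = closest_point S (A x)"
  proof (rule closest_point_unique[OF assms(1,2)])
    show "A (closest_point S x) \<in> S"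
      using assms closest_point_in_set[of S x] by blast
    show "\<forall>z\<in>S. dist (A x) (A (closest_point S x)) \<le> dist (A x) z"
    proof
      fix z assume "z \<in> S"
      then obtain w where "w \<in> S" "z = A w" using assms(4) by blast
      then show "dist (A x) (A (closest_point S x)) \<le> dist (A x) z"
        using closest_point_le[OF assms(2)] by (simp add: assms(5))
    qed
  qed
  then show ?thesis ..
qed

lemma dist_closest_point_le:
  assumes "convex S" "closed S" "s \<in> S"
  shows "dist (closest_point S x) s \<le> dist x s"
  using closest_point_lipschitz[OF assms(1,2), of x s] assms(3) by (auto simp: closest_point_self)

lemma has_vector_derivative_imp_difference_quotient:
  fixes \<gamma> :: "real \<Rightarrow> 'a::real_normed_vector"
  assumes "(\<gamma> has_vector_derivative v) (at 0)"
  shows "((\<lambda>t. (1/t) *\<^sub>R (\<gamma> t - \<gamma> 0)) \<longlongrightarrow> v) (at 0)"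
proof -
  have "((\<lambda>t. norm (\<gamma> t - \<gamma> 0 - (t - 0) *\<^sub>R v) / norm (t - 0)) \<longlongrightarrow> 0) (at 0)"
    using assms[unfolded has_vector_derivative_def has_derivative_iff_norm] by (rule conjunct2)
  moreover have "\<forall>\<^sub>F t in at 0.
      norm (\<gamma> t - \<gamma> 0 - (t - 0) *\<^sub>R v) / norm (t - 0) = norm ((1/t) *\<^sub>R (\<gamma> t - \<gamma> 0) - v)"
    unfolding eventually_at_filter
  proof (rule always_eventually, intro allI impI)
    fix t :: real assume "t \<noteq> 0"
    have "(1/t) *\<^sub>R (\<gamma> t - \<gamma> 0) - v = (1/t) *\<^sub>R (\<gamma> t - \<gamma> 0 - t *\<^sub>R v)"
      using \<open>t \<noteq> 0\<close> by (simp add: scaleR_diff_right)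
    then show "norm (\<gamma> t - \<gamma> 0 - (t - 0) *\<^sub>R v) / norm (t - 0) = norm ((1/t) *\<^sub>R (\<gamma> t - \<gamma> 0) - v)"
      by (simp add: divide_inverse_commute abs_inverse)
  qed
  ultimately have "((\<lambda>t. norm ((1/t) *\<^sub>R (\<gamma> t - \<gamma> 0) - v)) \<longlongrightarrow> 0) (at 0)"
    by (rule Lim_transform_eventually)
  then show ?thesis by (simp add: tendsto_norm_zero_iff LIM_zero_cancel)
qed

lemma has_vector_derivative_compose:
  assumes "(\<gamma> has_vector_derivative v) (at 0)" "(f has_derivative f') (at (\<gamma> 0))"
  shows "((\<lambda>t. f (\<gamma> t)) has_vector_derivative f' v) (at 0)"
proof -
  have "((f \<circ> \<gamma>) has_derivative (f' \<circ> (\<lambda>t. t *\<^sub>R v))) (at 0)"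
    using assms unfolding has_vector_derivative_def by (rule diff_chain_at)
  moreover have "f' \<circ> (\<lambda>t. t *\<^sub>R v) = (\<lambda>t. t *\<^sub>R f' v)"
    using linear_scale[OF has_derivative_linear[OF assms(2)]] by (simp add: fun_eq_iff)
  ultimately show ?thesis unfolding has_vector_derivative_def by (simp add: o_def)
qed

lemma continuous_derivative_imp_uniform_linearization:
  fixes f :: "'a::real_normed_vector \<Rightarrow> 'b::real_normed_vector"
  assumes "open U" "x0 \<in> U"
    and deriv: "\<And>x. x \<in> U \<Longrightarrow> (f has_derivative blinfun_apply (F x)) (at x)"
    and "continuous_on U F" and "e > 0"
  shows "\<exists>r>0. ball x0 r \<subseteq> U \<and>
           (\<forall>a\<in>ball x0 r. \<forall>b\<in>ball x0 r. norm (f b - f a - F x0 (b - a)) \<le> e * norm (b - a))"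
proof -
  obtain r1 where r1: "r1 > 0" "\<And>x. x \<in> U \<Longrightarrow> dist x x0 < r1 \<Longrightarrow> dist (F x) (F x0) < e"
    using assms(2,4,5) unfolding continuous_on_iff by metis
  obtain r2 where r2: "r2 > 0" "ball x0 r2 \<subseteq> U" using assms(1,2) open_contains_ball by blast
  define r where "r = min r1 r2"
  have ball: "ball x0 r \<subseteq> U" using r2 by (auto simp: r_def)
  have "norm (f b - f a - F x0 (b - a)) \<le> e * norm (b - a)" if "a \<in> ball x0 r" "b \<in> ball x0 r" for a b
  proof -
    have "norm (f b - f a - F x0 (b - a)) \<le> norm (b - a) * e"
    proof (rule differentiable_bound_linearization[where S = "ball x0 r"])
      show "a + t *\<^sub>R (b - a) \<in> ball x0 r" if "t \<in> {0..1}" for t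
        using convexD_alt[OF convex_ball \<open>a \<in> ball x0 r\<close> \<open>b \<in> ball x0 r\<close>, of t] that
        by (simp add: algebra_simps)
      show "(f has_derivative blinfun_apply (F x)) (at x within ball x0 r)" if "x \<in> ball x0 r" for x
        using deriv ball that by (blast intro: has_derivative_at_withinI)
      show "onorm (blinfun_apply (F x) - blinfun_apply (F x0)) \<le> e" if "x \<in> ball x0 r" for x
      proof -
        have "dist (F x) (F x0) < e" using r1(2)[of x] ball that by (auto simp: r_def dist_commute)
        moreover have "blinfun_apply (F x) - blinfun_apply (F x0) = blinfun_apply (F x - F x0)"
          by (simp add: fun_eq_iff blinfun.diff_left)
        ultimately show ?thesis by (simp add: dist_norm norm_blinfun.rep_eq)
      qed
      show "x0 \<in> ball x0 r" using r1 r2 by (simp add: r_def)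
    qed
    then show ?thesis by (simp add: mult.commute)
  qed
  then show ?thesis using ball r1 r2 by (intro exI[of _ r]) (auto simp: r_def)
qed

lemma continuous_derivative_imp_local_lipschitz:
  fixes f :: "'a::real_normed_vector \<Rightarrow> 'b::real_normed_vector"
  assumes "open U" "x0 \<in> U"
    and "\<And>x. x \<in> U \<Longrightarrow> (f has_derivative blinfun_apply (F x)) (at x)" and "continuous_on U F"
  shows "\<exists>r>0. ball x0 r \<subseteq> U \<and>
           (\<forall>x\<in>ball x0 r. \<forall>y\<in>ball x0 r. norm (f x - f y) \<le> (norm (F x0) + 1) * norm (x - y))"
proof -
  obtain r where "r > 0" "ball x0 r \<subseteq> U" and lin: "\<And>a b. a \<in> ball x0 r \<Longrightarrow> b \<in> ball x0 r \<Longrightarrow>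
      norm (f b - f a - F x0 (b - a)) \<le> 1 * norm (b - a)"
    using continuous_derivative_imp_uniform_linearization[OF assms, of 1] by auto
  have "norm (f x - f y) \<le> (norm (F x0) + 1) * norm (x - y)"
    if "x \<in> ball x0 r" "y \<in> ball x0 r" for x y
  proof -
    have "norm (f x - f y) \<le> norm (F x0 (x - y)) + norm (f x - f y - F x0 (x - y))"
      by (rule norm_triangle_sub)
    also have "\<dots> \<le> norm (F x0) * norm (x - y) + norm (x - y)"
      using lin[OF that(2,1)] norm_blinfun[of "F x0" "x - y"] by linarith
    finally show ?thesis by (simp add: algebra_simps)
  qed
  then show ?thesis using \<open>r > 0\<close> \<open>ball x0 r \<subseteq> U\<close> by blast
qed

lemma chart_inverse_secant_estimate:
  fixes \<phi> :: "'a::real_normed_vector \<Rightarrow> 'b::real_normed_vector" and \<psi> :: "'b \<Rightarrow> 'a"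
  assumes "open U" "x0 \<in> U" "open V" "\<phi> x0 \<in> V"
    and d\<phi>: "\<And>y. y \<in> U \<Longrightarrow> (\<phi> has_derivative blinfun_apply (\<Phi> y)) (at y)" and "continuous_on U \<Phi>"
    and d\<psi>: "\<And>z. z \<in> V \<Longrightarrow> (\<psi> has_derivative blinfun_apply (\<Psi> z)) (at z)" and "continuous_on V \<Psi>"
    and \<psi>\<phi>: "\<And>y. y \<in> U \<Longrightarrow> \<psi> (\<phi> y) = y"
  shows "\<exists>r>0. ball x0 r \<subseteq> U \<and> (\<forall>x\<in>ball x0 r. \<forall>y\<in>ball x0 r.
           norm (x - y - \<Psi> (\<phi> x0) (\<phi> x - \<phi> y)) \<le> norm (x - y) / 2)"
proof -
  define B where "B = norm (\<Phi> x0) + 1"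
  have B: "B > 0" by (simp add: B_def add_nonneg_pos)
  obtain r1 where r1: "r1 > 0" "ball x0 r1 \<subseteq> U" and lip: "\<And>x y. x \<in> ball x0 r1 \<Longrightarrow>
      y \<in> ball x0 r1 \<Longrightarrow> norm (\<phi> x - \<phi> y) \<le> B * norm (x - y)"
    using continuous_derivative_imp_local_lipschitz[OF assms(1,2) d\<phi> assms(6)] unfolding B_def
    by blast
  obtain \<rho> where \<rho>: "\<rho> > 0" and lin\<psi>: "\<And>a b. a \<in> ball (\<phi> x0) \<rho> \<Longrightarrow> b \<in> ball (\<phi> x0) \<rho> \<Longrightarrow>
      norm (\<psi> b - \<psi> a - \<Psi> (\<phi> x0) (b - a)) \<le> 1 / (2 * B) * norm (b - a)"
    using continuous_derivative_imp_uniform_linearization[OF assms(3,4) d\<psi> assms(8), of "1 / (2 * B)"] B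
    by auto
  obtain r2 where r2: "r2 > 0" "\<And>x. dist x x0 < r2 \<Longrightarrow> dist (\<phi> x) (\<phi> x0) < \<rho>"
    using has_derivative_continuous[OF d\<phi>[OF assms(2)]] \<rho> unfolding continuous_at_eps_delta by blast
  have "norm (x - y - \<Psi> (\<phi> x0) (\<phi> x - \<phi> y)) \<le> norm (x - y) / 2"
    if x: "x \<in> ball x0 (min r1 r2)" and y: "y \<in> ball x0 (min r1 r2)" for x y
  proof -
    have near: "dist x x0 < r2" "dist y x0 < r2" using x y by (simp_all add: dist_commute)
    have "\<phi> x \<in> ball (\<phi> x0) \<rho>" "\<phi> y \<in> ball (\<phi> x0) \<rho>"
      using r2(2)[OF near(1)] r2(2)[OF near(2)] by (simp_all add: dist_commute)
    moreover have "\<psi> (\<phi> x) = x" "\<psi> (\<phi> y) = y" using \<psi>\<phi> r1 x y by auto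
    ultimately have "norm (x - y - \<Psi> (\<phi> x0) (\<phi> x - \<phi> y)) \<le> 1 / (2 * B) * norm (\<phi> x - \<phi> y)"
      using lin\<psi>[of "\<phi> y" "\<phi> x"] by simp
    also have "\<dots> \<le> 1 / (2 * B) * (B * norm (x - y))"
      using lip x y B by (intro mult_left_mono) auto
    also have "\<dots> = norm (x - y) / 2" using B by simp
    finally show ?thesis .
  qed
  then show ?thesis using r1 r2 by (intro exI[of _ "min r1 r2"]) auto
qed

lemma C2_on_imp_continuous_derivative:
  assumes "C2_on U f"
  obtains F where "\<And>x. x \<in> U \<Longrightarrow> (f has_derivative blinfun_apply (F x)) (at x)" "continuous_on U F"
proof -
  obtain F F2 where F: "\<And>x. x \<in> U \<Longrightarrow>
      (f has_derivative blinfun_apply (F x)) (at x) \<and> (F has_derivative blinfun_apply (F2 x)) (at x)"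
    using assms unfolding C2_on_def by metis
  then have "continuous_on U F"
    by (blast intro: continuous_at_imp_continuous_on has_derivative_continuous)
  with F that show ?thesis by blast
qed

lemma chart_derivative_image_subset_tangent_space:
  fixes M :: "'a::euclidean_space set" and \<phi> \<psi> :: "'a \<Rightarrow> 'a"
  assumes "x \<in> U" "x \<in> M" "open V"
    and d\<psi>: "\<And>z. z \<in> V \<Longrightarrow> (\<psi> has_derivative \<psi>' z) (at z)"
    and \<psi>\<phi>: "\<And>y. y \<in> U \<Longrightarrow> \<psi> (\<phi> y) = y"
    and L: "subspace L" and chart: "\<phi> ` (M \<inter> U) = V \<inter> L"
  shows "\<psi>' (\<phi> x) ` L \<subseteq> tangent_space M x"
proof
  define a where "a = \<phi> x"
  have a: "a \<in> V \<inter> L" using chart assms(1,2) unfolding a_def by blast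
  fix u assume "u \<in> \<psi>' (\<phi> x) ` L"
  then obtain w where w: "w \<in> L" "u = \<psi>' a w" unfolding a_def by auto
  obtain \<epsilon> where \<epsilon>: "\<epsilon> > 0" "ball a \<epsilon> \<subseteq> V" using \<open>open V\<close> a open_contains_ball by blast
  define e where "e = \<epsilon> / (norm w + 1)"
  have nw: "norm w + 1 > 0" by (simp add: add_nonneg_pos)
  then have e: "e > 0" using \<epsilon> by (simp add: e_def)
  have "\<psi> (a + t *\<^sub>R w) \<in> M" if "t \<in> {-e<..<e}" for t
  proof -
    have "norm (t *\<^sub>R w) \<le> \<bar>t\<bar> * (norm w + 1)" by (simp add: mult_left_mono)
    also have "\<dots> < e * (norm w + 1)"
      using that nw by (intro mult_strict_right_mono) auto
    also have "\<dots> = \<epsilon>" using nw by (simp add: e_def)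
    finally have "a + t *\<^sub>R w \<in> ball a \<epsilon>" by (simp add: dist_norm)
    moreover have "a + t *\<^sub>R w \<in> L" using a w L by (simp add: subspace_add subspace_scale)
    ultimately have "a + t *\<^sub>R w \<in> \<phi> ` (M \<inter> U)" using \<epsilon> chart by blast
    then show ?thesis using \<psi>\<phi> by auto
  qed
  then have "(\<lambda>t. \<psi> (a + t *\<^sub>R w)) ` {-e<..<e} \<subseteq> M" by blast
  moreover have "((\<lambda>t. a + t *\<^sub>R w) has_vector_derivative w) (at 0)"
    by (auto intro!: derivative_eq_intros)
  then have "((\<lambda>t. \<psi> (a + t *\<^sub>R w)) has_vector_derivative u) (at 0)"
    unfolding w(2) by (rule has_vector_derivative_compose) (use d\<psi> a in simp)
  moreover have "\<psi> (a + 0 *\<^sub>R w) = x" using \<psi>\<phi> assms(1) by (simp add: a_def)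
  ultimately show "u \<in> tangent_space M x"
    unfolding tangent_space_def using e by (intro CollectI exI conjI) simp_all
qed

lemma tangent_space_subset_chart_derivative_image:
  fixes M :: "'a::euclidean_space set" and \<phi> \<psi> :: "'a \<Rightarrow> 'a"
  assumes U: "open U" "x \<in> U" and "x \<in> M"
    and d\<phi>: "\<And>y. y \<in> U \<Longrightarrow> (\<phi> has_derivative \<phi>' y) (at y)"
    and d\<psi>: "(\<psi> has_derivative \<psi>' (\<phi> x)) (at (\<phi> x))"
    and \<psi>\<phi>: "\<And>y. y \<in> U \<Longrightarrow> \<psi> (\<phi> y) = y"
    and L: "subspace L" and chart: "\<phi> ` (M \<inter> U) = V \<inter> L"
  shows "tangent_space M x \<subseteq> \<psi>' (\<phi> x) ` L"
proof
  fix v assume "v \<in> tangent_space M x"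
  then obtain \<gamma> e where \<gamma>: "e > 0" "\<gamma> ` {-e<..<e} \<subseteq> M" "\<gamma> 0 = x"
    "(\<gamma> has_vector_derivative v) (at 0)" unfolding tangent_space_def by blast
  have "(\<gamma> \<longlongrightarrow> \<gamma> 0) (at 0)"
    using has_vector_derivative_continuous[OF \<gamma>(4)] by (simp add: continuous_at)
  then have "eventually (\<lambda>t. \<gamma> t \<in> U) (at 0)"
    using U \<gamma>(3) by (intro topological_tendstoD) auto
  moreover have "eventually (\<lambda>t. t \<in> {-e<..<e}) (at (0::real))"
    unfolding eventually_at using \<gamma>(1) by (auto intro!: exI[of _ e] simp: dist_real_def)
  ultimately have "eventually (\<lambda>t. (1/t) *\<^sub>R (\<phi> (\<gamma> t) - \<phi> (\<gamma> 0)) \<in> L) (at 0)"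
  proof eventually_elim
    case (elim t)
    then have "\<phi> (\<gamma> t) \<in> L" "\<phi> (\<gamma> 0) \<in> L" using \<gamma>(2,3) U(2) \<open>x \<in> M\<close> chart by blast+
    then show ?case using L by (intro subspace_scale subspace_diff)
  qed
  moreover have "((\<lambda>t. \<phi> (\<gamma> t)) has_vector_derivative \<phi>' x v) (at 0)"
    using has_vector_derivative_compose[OF \<gamma>(4)] d\<phi>[OF U(2)] \<gamma>(3) by simp
  ultimately have "\<phi>' x v \<in> L"
    using has_vector_derivative_imp_difference_quotient[of "\<lambda>t. \<phi> (\<gamma> t)"]
    by (intro Lim_in_closed_set[OF closed_subspace[OF L]]) auto
  have "(\<psi> \<circ> \<phi> has_derivative \<psi>' (\<phi> x) \<circ> \<phi>' x) (at x)"
    using d\<phi>[OF U(2)] d\<psi> by (rule diff_chain_at)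
  moreover have "(\<psi> \<circ> \<phi> has_derivative (\<lambda>x. x)) (at x)"
    by (rule has_derivative_transform_within_open[OF has_derivative_ident U]) (simp add: \<psi>\<phi>)
  ultimately have "\<psi>' (\<phi> x) \<circ> \<phi>' x = (\<lambda>x. x)" by (rule has_derivative_unique)
  then have "v = \<psi>' (\<phi> x) (\<phi>' x v)" by (metis o_apply)
  with \<open>\<phi>' x v \<in> L\<close> show "v \<in> \<psi>' (\<phi> x) ` L" by blast
qed

lemma C2_submanifold_chart:
  assumes "C2_submanifold M" "x \<in> M"
  obtains U V and \<phi> :: "'a::euclidean_space \<Rightarrow> 'a" and L \<psi> \<Phi> \<Psi>
  where "open U" "x \<in> U" "open V" "\<phi> x \<in> V" "subspace L" "\<phi> ` (M \<inter> U) = V \<inter> L"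
    "\<And>y. y \<in> U \<Longrightarrow> \<psi> (\<phi> y) = y"
    "\<And>y. y \<in> U \<Longrightarrow> (\<phi> has_derivative blinfun_apply (\<Phi> y)) (at y)" "continuous_on U \<Phi>"
    "\<And>z. z \<in> V \<Longrightarrow> (\<psi> has_derivative blinfun_apply (\<Psi> z)) (at z)" "continuous_on V \<Psi>"
    "tangent_space M x = blinfun_apply (\<Psi> (\<phi> x)) ` L"
proof -
  have "\<exists>U V (\<phi>::'a \<Rightarrow> 'a) \<psi> L.
      open U \<and> x \<in> U \<and> open V \<and> C2_on U \<phi> \<and> C2_on V \<psi> \<and> \<phi> ` U = V \<and>
      (\<forall>y\<in>U. \<psi> (\<phi> y) = y) \<and> (\<forall>z\<in>V. \<phi> (\<psi> z) = z) \<and> subspace L \<and> \<phi> ` (M \<inter> U) = V \<inter> L"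
    using assms unfolding C2_submanifold_def by (rule bspec)
  then obtain U V L and \<phi> \<psi> :: "'a \<Rightarrow> 'a" where
    U: "open U" "x \<in> U" and V: "open V" and C2: "C2_on U \<phi>" "C2_on V \<psi>" and "\<phi> ` U = V"
    and \<psi>\<phi>: "\<forall>y\<in>U. \<psi> (\<phi> y) = y" and L: "subspace L" "\<phi> ` (M \<inter> U) = V \<inter> L"
    by blast
  obtain \<Phi> where "\<And>y. y \<in> U \<Longrightarrow> (\<phi> has_derivative blinfun_apply (\<Phi> y)) (at y)" "continuous_on U \<Phi>"
    by (rule C2_on_imp_continuous_derivative[OF C2(1)]) blast
  moreover obtain \<Psi> where "\<And>z. z \<in> V \<Longrightarrow> (\<psi> has_derivative blinfun_apply (\<Psi> z)) (at z)"
    "continuous_on V \<Psi>"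
    by (rule C2_on_imp_continuous_derivative[OF C2(2)]) blast
  moreover have "\<phi> x \<in> V" using \<open>\<phi> ` U = V\<close> U by blast
  moreover have "tangent_space M x = blinfun_apply (\<Psi> (\<phi> x)) ` L"
  proof
    show "tangent_space M x \<subseteq> blinfun_apply (\<Psi> (\<phi> x)) ` L"
      by (rule tangent_space_subset_chart_derivative_image[OF U assms(2)])
        (use calculation \<psi>\<phi> L in auto)
    show "blinfun_apply (\<Psi> (\<phi> x)) ` L \<subseteq> tangent_space M x"
      by (rule chart_derivative_image_subset_tangent_space[OF U(2) assms(2) V])
        (use calculation \<psi>\<phi> L in auto)
  qed
  ultimately show ?thesis
    using that[of U V \<phi> L \<psi> \<Phi> \<Psi>] U V \<psi>\<phi> L by blast
qed

lemma subspace_tangent_space: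
  assumes "C2_submanifold M" "x \<in> M"
  shows "subspace (tangent_space M x)"
proof (rule C2_submanifold_chart[OF assms])
  fix U V and \<phi> :: "'a \<Rightarrow> 'a" and L \<psi> \<Phi> \<Psi>
  assume "subspace L" "tangent_space M x = blinfun_apply (\<Psi> (\<phi> x)) ` L"
  then show ?thesis
    by (simp add: linear_subspace_image blinfun.bounded_linear_right bounded_linear.linear)
qed

lemma linear_image_tangent_space_subset:
  fixes M :: "'a::euclidean_space set"
  assumes A: "bounded_linear A" and "A x = x" "\<delta> > 0"
    and AM: "\<And>y. y \<in> M \<inter> ball x \<delta> \<Longrightarrow> A y \<in> M"
  shows "A ` tangent_space M x \<subseteq> tangent_space M x"
proof
  fix u assume "u \<in> A ` tangent_space M x"
  then obtain v where u: "u = A v" and "v \<in> tangent_space M x" by blast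
  then obtain \<gamma> e where \<gamma>: "e > 0" "\<gamma> ` {-e<..<e} \<subseteq> M" "\<gamma> 0 = x"
    "(\<gamma> has_vector_derivative v) (at 0)" unfolding tangent_space_def by blast
  obtain d where d: "d > 0" "\<And>t. dist t 0 < d \<Longrightarrow> dist (\<gamma> t) x < \<delta>"
    using has_vector_derivative_continuous[OF \<gamma>(4)] \<open>\<delta> > 0\<close> \<gamma>(3)
    unfolding continuous_at_eps_delta by blast
  have "(\<lambda>t. A (\<gamma> t)) ` {-min e d<..<min e d} \<subseteq> M"
  proof (intro image_subsetI AM)
    fix t :: real assume "t \<in> {-min e d<..<min e d}"
    then show "\<gamma> t \<in> M \<inter> ball x \<delta>" using \<gamma>(2) d(2)[of t] by (auto simp: dist_commute)
  qed
  moreover have "((\<lambda>t. A (\<gamma> t)) has_vector_derivative u) (at 0)"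
    unfolding u using \<gamma>(4) by (rule bounded_linear.has_vector_derivative[OF A])
  moreover have "min e d > 0" "A (\<gamma> 0) = x" using \<gamma>(1,3) d(1) \<open>A x = x\<close> by simp_all
  ultimately show "u \<in> tangent_space M x"
    unfolding tangent_space_def by (intro CollectI exI conjI)
qed

lemma C2_submanifold_secants_near_tangent:
  assumes "C2_submanifold M" "x \<in> M"
  shows "\<exists>r>0. \<forall>y\<in>M \<inter> ball x r. \<forall>z\<in>M \<inter> ball x r.
           \<exists>t\<in>tangent_space M x. norm (y - z - t) \<le> norm (y - z) / 2"
proof (rule C2_submanifold_chart[OF assms])
  fix U V and \<phi> :: "'a \<Rightarrow> 'a" and L \<psi> \<Phi> \<Psi>
  assume chart: "open U" "x \<in> U" "open V" "\<phi> x \<in> V" "subspace L" "\<phi> ` (M \<inter> U) = V \<inter> L"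
    "\<And>y. y \<in> U \<Longrightarrow> \<psi> (\<phi> y) = y"
    "\<And>y. y \<in> U \<Longrightarrow> (\<phi> has_derivative blinfun_apply (\<Phi> y)) (at y)" "continuous_on U \<Phi>"
    "\<And>z. z \<in> V \<Longrightarrow> (\<psi> has_derivative blinfun_apply (\<Psi> z)) (at z)" "continuous_on V \<Psi>"
    "tangent_space M x = blinfun_apply (\<Psi> (\<phi> x)) ` L"
  have "\<exists>r>0. ball x r \<subseteq> U \<and> (\<forall>y\<in>ball x r. \<forall>z\<in>ball x r.
      norm (y - z - \<Psi> (\<phi> x) (\<phi> y - \<phi> z)) \<le> norm (y - z) / 2)"
    by (rule chart_inverse_secant_estimate[OF chart(1-4,8-11,7)])
  then obtain r where "r > 0" "ball x r \<subseteq> U" and secant: "\<And>y z. y \<in> ball x r \<Longrightarrow>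
      z \<in> ball x r \<Longrightarrow> norm (y - z - \<Psi> (\<phi> x) (\<phi> y - \<phi> z)) \<le> norm (y - z) / 2"
    by blast
  have "\<exists>t\<in>tangent_space M x. norm (y - z - t) \<le> norm (y - z) / 2"
    if y: "y \<in> M \<inter> ball x r" and z: "z \<in> M \<inter> ball x r" for y z
  proof
    have "\<phi> y \<in> \<phi> ` (M \<inter> U)" "\<phi> z \<in> \<phi> ` (M \<inter> U)" using y z \<open>ball x r \<subseteq> U\<close> by auto
    then have "\<phi> y - \<phi> z \<in> L" using chart(5,6) by (auto intro: subspace_diff)
    then show "\<Psi> (\<phi> x) (\<phi> y - \<phi> z) \<in> tangent_space M x" unfolding chart(12) by blast
    show "norm (y - z - \<Psi> (\<phi> x) (\<phi> y - \<phi> z)) \<le> norm (y - z) / 2" by (rule secant) (use y z in auto)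
  qed
  then show ?thesis using \<open>r > 0\<close> by blast
qed

lemma dist_proj_tangent_le:
  assumes "C2_submanifold M" "xbar \<in> M"
  shows "dist (proj_tangent M xbar x) xbar \<le> dist x xbar"
  unfolding proj_tangent_def
  using translated_subspace[OF subspace_tangent_space[OF assms]] by (rule dist_closest_point_le)

lemma proj_tangent_locally_inj:
  assumes "C2_submanifold M" "xbar \<in> M"
  shows "\<exists>r>0. inj_on (proj_tangent M xbar) (M \<inter> ball xbar r)"
proof -
  obtain r where "r > 0" and secant: "\<And>x y. x \<in> M \<inter> ball xbar r \<Longrightarrow> y \<in> M \<inter> ball xbar r \<Longrightarrow>
      \<exists>t\<in>tangent_space M xbar. norm (x - y - t) \<le> norm (x - y) / 2"
    using C2_submanifold_secants_near_tangent[OF assms] by blast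
  have "inj_on (proj_tangent M xbar) (M \<inter> ball xbar r)"
  proof (rule inj_onI)
    fix x y assume x: "x \<in> M \<inter> ball xbar r" and y: "y \<in> M \<inter> ball xbar r"
      and eq: "proj_tangent M xbar x = proj_tangent M xbar y"
    obtain t where t: "t \<in> tangent_space M xbar" "norm (x - y - t) \<le> norm (x - y) / 2"
      using secant[OF x y] by blast
    have "inner (x - proj_tangent M xbar x) t = 0" "inner (y - proj_tangent M xbar y) t = 0"
      unfolding proj_tangent_def using subspace_tangent_space[OF assms] t(1)
      by (simp_all add: closest_point_translated_subspace_orthogonal)
    then have "inner (x - y) t = 0" using eq by (simp add: inner_diff_left)
    then have "(norm (x - y))\<^sup>2 = inner (x - y) (x - y - t)"
      by (simp add: inner_diff_right power2_norm_eq_inner)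
    also have "\<dots> \<le> norm (x - y) * norm (x - y - t)" by (rule norm_cauchy_schwarz)
    also have "\<dots> \<le> norm (x - y) * (norm (x - y) / 2)" using t(2) by (rule mult_left_mono) simp
    finally have "(norm (x - y))\<^sup>2 \<le> (norm (x - y))\<^sup>2 / 2" by (simp add: power2_eq_square)
    then show "x = y" by simp
  qed
  then show ?thesis using \<open>r > 0\<close> by blast
qed

lemma proj_tangent_swap_coords:
  assumes "C2_submanifold M" "xbar \<in> M" "xbar $ i = xbar $ j" "\<delta> > 0"
    and sym: "swap_coords i j ` (M \<inter> ball xbar \<delta>) = M \<inter> ball xbar \<delta>"
  shows "proj_tangent M xbar (swap_coords i j x) = swap_coords i j (proj_tangent M xbar x)"
proof -
  let ?A = "swap_coords i j" and ?T = "tangent_space M xbar"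
  have fix_xbar: "?A xbar = xbar" using assms(3) swap_coords_eq_self_iff by blast
  have "?A ` ?T \<subseteq> ?T"
    using linear_image_tangent_space_subset[where A = ?A and x = xbar, OF _ fix_xbar \<open>\<delta> > 0\<close>] sym
      linear_perm_act linear_conv_bounded_linear by blast
  moreover have "?T \<subseteq> ?A ` ?T"
  proof
    fix t assume "t \<in> ?T"
    then have "?A t \<in> ?T" using calculation by blast
    then show "t \<in> ?A ` ?T" using swap_coords_involution[of i j t] by (metis image_eqI)
  qed
  ultimately have "?A ` ?T = ?T" ..
  have "?A ` (\<lambda>v. xbar + v) ` ?T = (\<lambda>v. xbar + v) ` ?A ` ?T"
    by (simp add: image_image linear_add[OF linear_perm_act] fix_xbar)
  also have "\<dots> = (\<lambda>v. xbar + v) ` ?T" using \<open>?A ` ?T = ?T\<close> by simp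
  finally have "?A ` (\<lambda>v. xbar + v) ` ?T = (\<lambda>v. xbar + v) ` ?T" .
  moreover note translated_subspace[OF subspace_tangent_space[OF assms(1,2)], of xbar]
  ultimately show ?thesis
    unfolding proj_tangent_def
    by (intro closest_point_isometry dist_perm_act transpose_permutes) blast+
qed

lemma locally_symmetric_swap_coords:
  assumes "locally_symmetric M" "xbar \<in> M"
  shows "\<exists>\<delta>>0. \<forall>i j. xbar $ i = xbar $ j \<longrightarrow>
           swap_coords i j ` (M \<inter> ball xbar \<delta>) = M \<inter> ball xbar \<delta>"
proof -
  obtain \<delta> where "\<delta> > 0" and sym: "\<forall>y\<in>M \<inter> ball xbar \<delta>. \<forall>\<tau>. \<tau> permutes UNIV \<and>
      perm_act \<tau> y = y \<longrightarrow> perm_act \<tau> ` (M \<inter> ball xbar \<delta>) = M \<inter> ball xbar \<delta>"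
    using assms unfolding locally_symmetric_def by blast
  have "xbar \<in> M \<inter> ball xbar \<delta>" using assms(2) \<open>\<delta> > 0\<close> by simp
  with sym have fixing_xbar: "perm_act \<tau> ` (M \<inter> ball xbar \<delta>) = M \<inter> ball xbar \<delta>"
    if "\<tau> permutes UNIV" "perm_act \<tau> xbar = xbar" for \<tau>
    using that by blast
  have "swap_coords i j ` (M \<inter> ball xbar \<delta>) = M \<inter> ball xbar \<delta>" if "xbar $ i = xbar $ j" for i j
    by (rule fixing_xbar) (simp_all add: transpose_permutes swap_coords_eq_self_iff that)
  then show ?thesis using \<open>\<delta> > 0\<close> by blast
qed

lemma proj_tangent_same_coincidences:
  assumes "C2_submanifold M" "locally_symmetric M" "xbar \<in> M"
  shows "\<exists>\<delta>>0. \<forall>x\<in>M \<inter> ball xbar \<delta>. \<forall>i j.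
           x $ i = x $ j \<longleftrightarrow> proj_tangent M xbar x $ i = proj_tangent M xbar x $ j"
proof -
  let ?\<pi> = "proj_tangent M xbar"
  obtain \<delta>1 where "\<delta>1 > 0" and sym: "\<And>i j. xbar $ i = xbar $ j \<Longrightarrow>
      swap_coords i j ` (M \<inter> ball xbar \<delta>1) = M \<inter> ball xbar \<delta>1"
    using locally_symmetric_swap_coords[OF assms(2,3)] by blast
  have commute: "?\<pi> (swap_coords i j z) = swap_coords i j (?\<pi> z)" if "xbar $ i = xbar $ j" for i j z
    using proj_tangent_swap_coords[OF assms(1,3) that \<open>\<delta>1 > 0\<close> sym[OF that]] .
  obtain r where "r > 0" and inj: "inj_on ?\<pi> (M \<inter> ball xbar r)"
    using proj_tangent_locally_inj[OF assms(1,3)] by blast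
  obtain \<delta>0 where "\<delta>0 > 0"
    and inherit: "\<And>y i j. dist y xbar < \<delta>0 \<Longrightarrow> y $ i = y $ j \<Longrightarrow> xbar $ i = xbar $ j"
    using nth_eq_near_imp_nth_eq[of xbar] by blast
  define \<delta> where "\<delta> = min \<delta>0 (min \<delta>1 r)"
  have "x $ i = x $ j \<longleftrightarrow> ?\<pi> x $ i = ?\<pi> x $ j" if x: "x \<in> M" "dist x xbar < \<delta>" for x i j
  proof
    assume "x $ i = x $ j"
    then have "swap_coords i j x = x" "xbar $ i = xbar $ j"
      using inherit x by (auto simp: \<delta>_def swap_coords_eq_self_iff)
    then have "swap_coords i j (?\<pi> x) = ?\<pi> x" using commute by metis
    then show "?\<pi> x $ i = ?\<pi> x $ j" by (simp add: swap_coords_eq_self_iff)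
  next
    assume "?\<pi> x $ i = ?\<pi> x $ j"
    moreover have "dist (?\<pi> x) xbar < \<delta>0"
      using dist_proj_tangent_le[OF assms(1,3), of x] x by (simp add: \<delta>_def)
    ultimately have "xbar $ i = xbar $ j" using inherit by blast
    then have fix_xbar: "swap_coords i j xbar = xbar" by (simp add: swap_coords_eq_self_iff)
    have "swap_coords i j x \<in> M"
      using sym[OF \<open>xbar $ i = xbar $ j\<close>] x by (auto simp: \<delta>_def dist_commute)
    moreover have "dist xbar (swap_coords i j x) = dist xbar x"
      using dist_perm_act[OF transpose_permutes[of i j], of xbar x] fix_xbar by simp
    ultimately have "swap_coords i j x \<in> M \<inter> ball xbar r" using x by (simp add: \<delta>_def dist_commute)
    moreover have "?\<pi> (swap_coords i j x) = ?\<pi> x"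
      using commute[OF \<open>xbar $ i = xbar $ j\<close>] \<open>?\<pi> x $ i = ?\<pi> x $ j\<close>
      by (simp add: swap_coords_eq_self_iff)
    ultimately have "swap_coords i j x = x" using inj x by (auto simp: \<delta>_def inj_on_def dist_commute)
    then show "x $ i = x $ j" by (simp add: swap_coords_eq_self_iff)
  qed
  moreover have "\<delta> > 0" using \<open>\<delta>0 > 0\<close> \<open>\<delta>1 > 0\<close> \<open>r > 0\<close> by (simp add: \<delta>_def)
  ultimately show ?thesis by (auto simp: dist_commute)
qed

theorem proposition3p14:
  fixes M :: "(real^'n::{finite,linorder}) set"
    and \<sigma> :: "'n::{finite,linorder} \<Rightarrow> 'n" and xbar :: "real^('n::{finite,linorder})"
  assumes "locally_symmetric_C2_submanifold M"
    and "\<sigma> permutes (UNIV::('n::{finite,linorder}) set)"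
    and "xbar \<in> M \<inter> Delta \<sigma>"
  shows "\<exists>\<delta>>0. \<forall>x\<in>M \<inter> ball xbar \<delta>. \<exists>\<sigma>'. \<sigma>' permutes (UNIV::('n::{finite,linorder}) set) \<and>
           refines (perm_partition \<sigma>') (perm_partition \<sigma>) \<and>
           x \<in> Delta \<sigma>' \<and> proj_tangent M xbar x \<in> Delta \<sigma>'"
proof -
  have xbar: "xbar \<in> M" "perm_partition \<sigma> = vec_partition xbar"
    using assms(3) by (auto simp: Delta_def)
  have M: "C2_submanifold M" "locally_symmetric M"
    using assms(1) by (auto simp: locally_symmetric_C2_submanifold_def)
  obtain \<delta>1 where "\<delta>1 > 0" and same: "\<And>x i j. x \<in> M \<inter> ball xbar \<delta>1 \<Longrightarrow>
      x $ i = x $ j \<longleftrightarrow> proj_tangent M xbar x $ i = proj_tangent M xbar x $ j"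
    using proj_tangent_same_coincidences[OF M xbar(1)] by blast
  obtain \<delta>0 where "\<delta>0 > 0"
    and inherit: "\<And>y i j. dist y xbar < \<delta>0 \<Longrightarrow> y $ i = y $ j \<Longrightarrow> xbar $ i = xbar $ j"
    using nth_eq_near_imp_nth_eq[of xbar] by blast
  have "\<exists>\<sigma>'. \<sigma>' permutes UNIV \<and> refines (perm_partition \<sigma>') (perm_partition \<sigma>) \<and>
           x \<in> Delta \<sigma>' \<and> proj_tangent M xbar x \<in> Delta \<sigma>'"
    if x: "x \<in> M \<inter> ball xbar (min \<delta>0 \<delta>1)" for x
  proof -
    obtain \<sigma>' where "\<sigma>' permutes UNIV" and \<sigma>': "perm_partition \<sigma>' = vec_partition x"
      using exists_perm_partition_eq_vec_partition by blast
    moreover have "refines (vec_partition x) (vec_partition xbar)"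
      using inherit x by (intro refines_vec_partition) (auto simp: dist_commute)
    moreover have "vec_partition (proj_tangent M xbar x) = vec_partition x"
      using same x by (intro vec_partition_eqI) auto
    ultimately show ?thesis by (auto simp: Delta_def xbar(2))
  qed
  then show ?thesis using \<open>\<delta>0 > 0\<close> \<open>\<delta>1 > 0\<close> by (intro exI[of _ "min \<delta>0 \<delta>1"]) auto
qed

end
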